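(* For $0\le r<n$, the Laplacian $\Lambda_r$ on $M_r$ is positive definite. (Consequently $H_r(M)=0$ for $0\le r<n$.)
   Context: $M_r$ ($0\le r\le n$) is the complex vector space with orthonormal basis the injective words of length $r$ on $\{1,\dots,n\}$, with boundary $\partial_r(a_1\cdots a_r)=\sum_{j=1}^r(-1)^{j-1}a_1\cdots\widehat{a_j}\cdots a_r$. $\delta_r$ is the adjoint of $\partial_{r+1}$ with respect to these orthonormal bases, and $\Lambda_r=\delta_{r-1}\partial_r+\partial_{r+1}\delta_r$. $H_r(M)$ is the $r$-th homology of $(M_*,\partial_* )$. *)

theory Defs
  imports Complex_Main
begin

text \<open>Injective words of length r on the alphabet {1..n}; they form the
orthonormal basis of M_r.\<close>
definition words :: "nat \<Rightarrow> nat \<Rightarrow> nat list set" where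
  "words n r = {w. distinct w \<and> length w = r \<and> set w \<subseteq> {1..n}}"

text \<open>Vectors of M_r: complex coefficient functions on words supported on words n r.\<close>
definition chains :: "nat \<Rightarrow> nat \<Rightarrow> (nat list \<Rightarrow> complex) set" where
  "chains n r = {f. \<forall>w. f w \<noteq> 0 \<longrightarrow> w \<in> words n r}"

definition cip :: "nat \<Rightarrow> nat \<Rightarrow> (nat list \<Rightarrow> complex) \<Rightarrow> (nat list \<Rightarrow> complex) \<Rightarrow> complex" where
  "cip n r f g = (\<Sum>w\<in>words n r. f w * cnj (g w))"

definition del :: "nat \<Rightarrow> nat list \<Rightarrow> nat list" where
  "del j w = take j w @ drop (Suc j) w"

text \<open>Boundary map partial_r : M_r -> M_(r-1), linear extension of
  a_1..a_r |-> sum_j (-1)^(j-1) a_1..hat a_j..a_r (positions 1-based; here 0-based j).\<close>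
definition bd :: "nat \<Rightarrow> nat \<Rightarrow> (nat list \<Rightarrow> complex) \<Rightarrow> (nat list \<Rightarrow> complex)" where
  "bd n r f = (\<lambda>u. \<Sum>w\<in>words n r. \<Sum>j<r. if del j w = u then (-1)^j * f w else 0)"

text \<open>delta_r : M_r -> M_(r+1), the adjoint of partial_(r+1) w.r.t. the orthonormal
  bases (conjugate transpose of its real matrix).\<close>
definition cobd :: "nat \<Rightarrow> nat \<Rightarrow> (nat list \<Rightarrow> complex) \<Rightarrow> (nat list \<Rightarrow> complex)" where
  "cobd n r g = (\<lambda>w. if w \<in> words n (Suc r) then
      (\<Sum>u\<in>words n r. \<Sum>j<Suc r. if del j w = u then (-1)^j * g u else 0) else 0)"

definition lap :: "nat \<Rightarrow> nat \<Rightarrow> (nat list \<Rightarrow> complex) \<Rightarrow> (nat list \<Rightarrow> complex)" where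
  "lap n r f = (\<lambda>w. (if r = 0 then 0 else cobd n (r - 1) (bd n r f) w)
                    + bd n (Suc r) (cobd n r f) w)"

end

(*
  Since \<Lambda> = \<delta>\<partial> + \<partial>\<delta> with \<delta> adjoint to \<partial>, we have <\<Lambda>f, f> = |\<partial>f|^2 + |\<delta>f|^2, which
  vanishes only for a cycle f orthogonal to all boundaries. So positivity reduces to
  H_r(M) = 0 for r < n.

  Acyclicity is proved for the relative complexes in which a set F of letters is frozen:
  chains live on words containing F, and the boundary only deletes letters outside F
  (F = {} is M itself). Induct on the number of free letters. Prepending a free letter y
  is a cone operator that contracts the part of a cycle on words avoiding y; what remains
  is a cycle of the complex in which y is frozen as well, hence a boundary there, and the
  two primitives glue to one for the original cycle. When every letter is frozen there
  are no nonzero chains of length r < n.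
*)
theory Submission
  imports Defs "HOL-Library.Function_Algebras" "HOL-Library.Disjoint_Sets"
begin

definition insert_at :: "nat \<Rightarrow> 'a \<Rightarrow> 'a list \<Rightarrow> 'a list" where
  "insert_at j z u = take j u @ z # drop j u"

lemma insert_at_Nil [simp]: "insert_at j z [] = [z]"
  by (simp add: insert_at_def)

lemma insert_at_0 [simp]: "insert_at 0 z u = z # u"
  by (simp add: insert_at_def)

lemma insert_at_Suc_Cons [simp]: "insert_at (Suc j) z (b # u) = b # insert_at j z u"
  by (simp add: insert_at_def)

lemma length_insert_at [simp]: "length (insert_at j z u) = Suc (length u)"
  by (simp add: insert_at_def)

lemma set_insert_at [simp]: "set (insert_at j z u) = insert z (set u)"
  unfolding insert_at_def by (metis Un_insert_right append_take_drop_id list.set(2) set_append)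

lemma distinct_insert_at [simp]: "distinct (insert_at j z u) \<longleftrightarrow> distinct u \<and> z \<notin> set u"
proof (induction u arbitrary: j)
  case (Cons b u)
  then show ?case by (cases j) auto
qed simp

lemma insert_at_insert_at:
  "j \<le> i \<Longrightarrow> i \<le> length u \<Longrightarrow> insert_at j y (insert_at i z u) = insert_at (Suc i) z (insert_at j y u)"
proof (induction u arbitrary: i j)
  case (Cons b u)
  then show ?case by (cases j; cases i) auto
qed simp

lemma nth_insert_at: "j \<le> length u \<Longrightarrow> insert_at j z u ! j = z"
  by (simp add: insert_at_def nth_append)

lemma del_insert_at: "j \<le> length u \<Longrightarrow> del j (insert_at j z u) = u"
  by (simp add: insert_at_def del_def)

lemma insert_at_del: "j < length w \<Longrightarrow> insert_at j (w ! j) (del j w) = w"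
  by (simp add: insert_at_def del_def min_def id_take_nth_drop[symmetric])

lemma finite_words [simp]: "finite (words n r)"
proof -
  have "words n r \<subseteq> {xs. set xs \<subseteq> {1..n} \<and> length xs = r}"
    by (auto simp: words_def)
  then show ?thesis
    using finite_lists_length_eq[of "{1..n}" r] finite_subset by blast
qed

lemma del_in_words: "w \<in> words n (Suc r) \<Longrightarrow> j < Suc r \<Longrightarrow> del j w \<in> words n r"
  unfolding words_def del_def
  using set_take_subset[of j w] set_drop_subset[of "Suc j" w]
  by (auto simp: distinct_append set_take_disj_set_drop_if_distinct)

lemma insert_at_in_words:
  "insert_at j z u \<in> words n (Suc r) \<longleftrightarrow> u \<in> words n r \<and> z \<in> {1..n} \<and> z \<notin> set u"
  by (auto simp: words_def)

section \<open>Relative complexes with frozen letters\<close>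

definition rel_chains :: "nat \<Rightarrow> nat set \<Rightarrow> nat \<Rightarrow> (nat list \<Rightarrow> complex) set" where
  "rel_chains n F r = {f. \<forall>w. f w \<noteq> 0 \<longrightarrow> w \<in> words n r \<and> F \<subseteq> set w}"

definition rel_bd :: "nat \<Rightarrow> nat set \<Rightarrow> (nat list \<Rightarrow> complex) \<Rightarrow> nat list \<Rightarrow> complex" where
  "rel_bd n F f = (\<lambda>u. \<Sum>j\<le>length u. \<Sum>z\<in>{1..n} - F. (-1)^j * f (insert_at j z u))"

definition cone :: "'a \<Rightarrow> ('a list \<Rightarrow> complex) \<Rightarrow> 'a list \<Rightarrow> complex" where
  "cone y f w = (case w of [] \<Rightarrow> 0 | a # u \<Rightarrow> if a = y \<and> y \<notin> set u then f u else 0)"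

lemma chains_eq_rel_chains: "chains n r = rel_chains n {} r"
  by (simp add: chains_def rel_chains_def)

lemma rel_chains_diff: "f \<in> rel_chains n F r \<Longrightarrow> g \<in> rel_chains n F r \<Longrightarrow> f - g \<in> rel_chains n F r"
  by (simp add: rel_chains_def) (metis diff_self)

lemma rel_chains_add: "f \<in> rel_chains n F r \<Longrightarrow> g \<in> rel_chains n F r \<Longrightarrow> f + g \<in> rel_chains n F r"
  by (simp add: rel_chains_def) (metis add_0)

lemma rel_chains_antimono: "f \<in> rel_chains n F' r \<Longrightarrow> F \<subseteq> F' \<Longrightarrow> f \<in> rel_chains n F r"
  by (auto simp: rel_chains_def)

lemma rel_chains_non_distinct: "f \<in> rel_chains n F r \<Longrightarrow> \<not> distinct w \<Longrightarrow> f w = 0"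
  by (auto simp: rel_chains_def words_def)

lemma rel_chains_full:
  assumes "r < n" "{1..n} \<subseteq> F" "f \<in> rel_chains n F r"
  shows "f = 0"
proof
  fix w
  show "f w = 0 w"
  proof (rule ccontr)
    assume "f w \<noteq> 0 w"
    then have "w \<in> words n r" "{1..n} \<subseteq> set w"
      using assms(2,3) by (auto simp: rel_chains_def)
    then have "n \<le> r"
      using card_mono[of "set w" "{1..n}"] distinct_card[of w] by (auto simp: words_def)
    then show False
      using assms(1) by simp
  qed
qed

lemma cone_in_rel_chains:
  "y \<in> {1..n} \<Longrightarrow> f \<in> rel_chains n F r \<Longrightarrow> cone y f \<in> rel_chains n F (Suc r)"
  by (auto simp: rel_chains_def cone_def words_def split: list.splits if_splits)

lemma rel_bd_in_rel_chains:
  assumes "f \<in> rel_chains n F (Suc r)"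
  shows "rel_bd n F f \<in> rel_chains n F r"
  unfolding rel_chains_def
proof (intro CollectI allI impI)
  fix u
  assume "rel_bd n F f u \<noteq> 0"
  then obtain j z where z: "z \<in> {1..n} - F" and "f (insert_at j z u) \<noteq> 0"
    unfolding rel_bd_def by (metis (no_types, lifting) mult_zero_right sum.neutral)
  then have "insert_at j z u \<in> words n (Suc r)" "F \<subseteq> insert z (set u)"
    using assms unfolding rel_chains_def by force+
  then show "u \<in> words n r \<and> F \<subseteq> set u"
    using z by (auto simp: insert_at_in_words)
qed

lemma rel_bd_diff: "rel_bd n F (f - g) = rel_bd n F f - rel_bd n F g"
  by (simp add: rel_bd_def fun_eq_iff right_diff_distrib sum_subtractf)

lemma rel_bd_add: "rel_bd n F (f + g) = rel_bd n F f + rel_bd n F g"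
  by (simp add: rel_bd_def fun_eq_iff distrib_left sum.distrib)

lemma rel_bd_rel_bd: "rel_bd n F (rel_bd n F f) = 0"
proof
  fix v :: "nat list"
  define S where "S = {1..n} - F"
  define m where "m = length v"
  define \<phi> where "\<phi> = (\<lambda>(i, z, j, y). (-1)^i * ((-1)^j * f (insert_at j y (insert_at i z v))))"
  define T where "T = {..m} \<times> S \<times> {..Suc m} \<times> S"
  \<comment> \<open>\<open>\<iota>\<close> pairs each double insertion with the one building the same word in the other order;
    their signs are opposite.\<close>
  define \<iota> where "\<iota> = (\<lambda>(i, z :: nat, j, y :: nat). if j \<le> i then (j, y, Suc i, z) else (j - 1, y, i, z))"
  have "rel_bd n F (rel_bd n F f) v = (\<Sum>i\<le>m. \<Sum>z\<in>S. \<Sum>j\<le>Suc m. \<Sum>y\<in>S. \<phi> (i, z, j, y))"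
    by (simp del: sum.atMost_Suc add: rel_bd_def sum_distrib_left S_def m_def \<phi>_def)
  also have "\<dots> = sum \<phi> T"
    by (simp add: T_def sum.cartesian_product case_prod_beta)
  also have "\<dots> = 0"
  proof (rule sum_involution_eq_0)
    fix a
    assume "a \<in> T"
    then obtain i z j y where a: "a = (i, z, j, y)" and i: "i \<le> m" and j: "j \<le> Suc m"
      and "z \<in> S" "y \<in> S"
      by (auto simp: T_def)
    then show "\<iota> a \<in> T" "\<iota> (\<iota> a) = a" "\<iota> a \<noteq> a"
      by (auto simp: \<iota>_def T_def)
    show "\<phi> (\<iota> a) + \<phi> a = 0"
      using a i j insert_at_insert_at[of j i v y z] insert_at_insert_at[of i "j - 1" v z y]
      by (cases "j \<le> i") (auto simp: \<iota>_def \<phi>_def m_def power_eq_if)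
  qed
  finally show "rel_bd n F (rel_bd n F f) v = 0 v"
    by simp
qed

lemma rel_bd_cone_notin:
  assumes "y \<in> {1..n}" "y \<notin> F" "y \<notin> set u"
  shows "rel_bd n F (cone y f) u = f u"
proof -
  have "(\<Sum>z\<in>{1..n} - F. (-1)^j * cone y f (insert_at j z u)) = (if j = 0 then f u else 0)"
    if "j \<le> length u" for j
  proof (cases j)
    case 0
    then have "(\<Sum>z\<in>{1..n} - F. (-1)^j * cone y f (insert_at j z u))
        = (\<Sum>z\<in>{1..n} - F. if z = y then f u else 0)"
      using assms(3) by (intro sum.cong) (auto simp: cone_def)
    then show ?thesis
      using 0 assms(1,2) by simp
  next
    case (Suc j')
    with that obtain b t where "u = b # t"
      by (cases u) auto
    with Suc assms(3) show ?thesis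
      by (simp add: cone_def)
  qed
  then show ?thesis
    by (simp add: rel_bd_def)
qed

lemma rel_bd_cone_in:
  assumes "\<And>w. y \<in> set w \<Longrightarrow> e w = 0" and "y \<in> set u"
  shows "rel_bd n F (cone y e) u = (if hd u = y then - rel_bd n F e (tl u) else 0)"
proof -
  obtain b t where u: "u = b # t"
    using assms(2) by (cases u) auto
  have "rel_bd n F (cone y e) u = (\<Sum>z\<in>{1..n} - F. cone y e (z # u))
      + (\<Sum>j\<le>length t. \<Sum>z\<in>{1..n} - F. (-1)^(Suc j) * cone y e (b # insert_at j z t))"
    unfolding rel_bd_def u by (simp del: sum.atMost_Suc add: sum.atMost_Suc_shift)
  also have "(\<Sum>z\<in>{1..n} - F. cone y e (z # u)) = 0"
    using assms(2) by (intro sum.neutral) (auto simp: cone_def)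
  also have "(\<Sum>j\<le>length t. \<Sum>z\<in>{1..n} - F. (-1)^(Suc j) * cone y e (b # insert_at j z t))
      = (if b = y then - rel_bd n F e t else 0)"
  proof -
    have "cone y e (b # insert_at j z t) = (if b = y then e (insert_at j z t) else 0)" for j z
      using assms(1) by (auto simp: cone_def)
    then show ?thesis
      by (simp add: rel_bd_def sum_negf)
  qed
  finally show ?thesis
    using u by simp
qed

lemma rel_bd_cone:
  assumes "y \<in> {1..n}" "y \<notin> F" "\<And>w. y \<in> set w \<Longrightarrow> e w = 0" "rel_bd n F e = 0"
  shows "rel_bd n F (cone y e) = e"
proof
  fix u
  show "rel_bd n F (cone y e) u = e u"
  proof (cases "y \<in> set u")
    case True
    then show ?thesis
      using rel_bd_cone_in[of y e u n F] assms(3,4) by simp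
  next
    case False
    then show ?thesis
      using rel_bd_cone_notin assms(1,2) by blast
  qed
qed

lemma rel_bd_insert_mem:
  assumes "\<And>w. \<not> distinct w \<Longrightarrow> k w = 0" and "y \<in> set u"
  shows "rel_bd n (insert y F) k u = rel_bd n F k u"
proof -
  have "(\<Sum>z\<in>{1..n} - insert y F. (-1)^j * k (insert_at j z u))
      = (\<Sum>z\<in>{1..n} - F. (-1)^j * k (insert_at j z u))" for j
    using assms by (intro sum.mono_neutral_left) auto
  then show ?thesis
    by (simp add: rel_bd_def)
qed

lemma rel_cycle_minus_cone_boundary:
  assumes y: "y \<in> {1..n}" "y \<notin> F"
    and f: "f \<in> rel_chains n F r" "rel_bd n F f = 0"
  defines "g \<equiv> f - rel_bd n F (cone y f)"
  shows "g \<in> rel_chains n (insert y F) r" "rel_bd n (insert y F) g = 0"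
proof -
  have g_chain: "g \<in> rel_chains n F r"
    unfolding g_def using f(1) y(1)
    by (intro rel_chains_diff rel_bd_in_rel_chains cone_in_rel_chains)
  have g_avoiding: "g u = 0" if "y \<notin> set u" for u
    using rel_bd_cone_notin[OF y that] by (simp add: g_def)
  with g_chain show "g \<in> rel_chains n (insert y F) r"
    by (auto simp: rel_chains_def)
  have g_cycle: "rel_bd n F g = 0"
    by (simp add: g_def rel_bd_diff rel_bd_rel_bd f(2))
  show "rel_bd n (insert y F) g = 0"
  proof
    fix u
    show "rel_bd n (insert y F) g u = 0 u"
    proof (cases "y \<in> set u")
      case True
      then show ?thesis
        using rel_bd_insert_mem[of g y u n F] rel_chains_non_distinct[OF g_chain] g_cycle
        by simp
    next
      case False
      then show ?thesis
        by (simp add: rel_bd_def g_avoiding)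
    qed
  qed
qed

lemma rel_bd_exact_step:
  assumes y: "y \<in> {1..n}" "y \<notin> F"
    and exact_insert: "\<And>g. g \<in> rel_chains n (insert y F) r \<Longrightarrow> rel_bd n (insert y F) g = 0
      \<Longrightarrow> \<exists>k\<in>rel_chains n (insert y F) (Suc r). rel_bd n (insert y F) k = g"
    and f: "f \<in> rel_chains n F r" "rel_bd n F f = 0"
  shows "\<exists>h\<in>rel_chains n F (Suc r). rel_bd n F h = f"
proof -
  define g where "g = f - rel_bd n F (cone y f)"
  obtain k where k: "k \<in> rel_chains n (insert y F) (Suc r)" "rel_bd n (insert y F) k = g"
    using exact_insert rel_cycle_minus_cone_boundary[OF y f] unfolding g_def by blast
  have k_chain: "k \<in> rel_chains n F (Suc r)"
    using k(1) by (rule rel_chains_antimono) blast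
  \<comment> \<open>\<open>rel_bd n F k\<close> can differ from \<open>g\<close> only on words avoiding \<open>y\<close>; that error is a cycle
    which the cone on \<open>y\<close> bounds.\<close>
  define e where "e = rel_bd n F k - g"
  have "e w = 0" if "y \<in> set w" for w
    using rel_bd_insert_mem[of k y w n F] rel_chains_non_distinct[OF k_chain] that k(2)
    by (simp add: e_def)
  moreover have "rel_bd n F e = 0"
    by (simp add: e_def g_def rel_bd_diff rel_bd_rel_bd f(2))
  ultimately have cone_e: "rel_bd n F (cone y e) = e"
    using rel_bd_cone y by blast
  have "rel_bd n F (cone y f) = f - g" "rel_bd n F k = e + g"
    by (simp_all add: g_def e_def)
  then have "rel_bd n F (cone y f + k - cone y e) = f"
    by (simp add: rel_bd_diff rel_bd_add cone_e)
  moreover have "e \<in> rel_chains n F r"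
    unfolding e_def g_def using f(1) y(1) k_chain
    by (intro rel_chains_diff rel_bd_in_rel_chains cone_in_rel_chains)
  then have "cone y f + k - cone y e \<in> rel_chains n F (Suc r)"
    using f(1) y(1) k_chain by (intro rel_chains_diff rel_chains_add cone_in_rel_chains)
  ultimately show ?thesis
    by blast
qed

lemma rel_bd_exact:
  assumes "r < n" "f \<in> rel_chains n F r" "rel_bd n F f = 0"
  shows "\<exists>g\<in>rel_chains n F (Suc r). rel_bd n F g = f"
  using assms(2,3)
proof (induction "card ({1..n} - F)" arbitrary: F f)
  case 0
  then have "f = 0"
    using rel_chains_full[OF assms(1)] by auto
  moreover have "(0 :: nat list \<Rightarrow> complex) \<in> rel_chains n F (Suc r)" "rel_bd n F 0 = 0"
    by (simp_all add: rel_chains_def rel_bd_def fun_eq_iff)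
  ultimately show ?case
    by blast
next
  case (Suc m)
  then obtain y where y: "y \<in> {1..n}" "y \<notin> F"
    by (metis Diff_eq_empty_iff card.empty nat.distinct(1) subsetI)
  then have "card ({1..n} - insert y F) = m"
    using Suc.hyps(2) by (metis Diff_insert card_Diff_singleton diff_Suc_1 DiffI)
  then show ?case
    using rel_bd_exact_step[OF y _ Suc.prems] Suc.hyps(1) by blast
qed

section \<open>Acyclicity of the complex of injective words\<close>

lemma sum_words_del_eq:
  assumes f: "f \<in> chains n (Suc (length u))" and j: "j \<le> length u"
  shows "(\<Sum>w\<in>words n (Suc (length u)). if del j w = u then f w else 0)
    = (\<Sum>z\<in>{1..n}. f (insert_at j z u))"
proof -
  have pointwise: "(if del j w = u then f w else 0) = (\<Sum>z\<in>{1..n}. if w = insert_at j z u then f w else 0)"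
    if w: "w \<in> words n (Suc (length u))" for w
  proof (cases "del j w = u")
    case True
    have jw: "j < length w"
      using w j by (simp add: words_def)
    then have "w ! j \<in> {1..n}"
      using w nth_mem[OF jw] unfolding words_def by blast
    moreover have "w = insert_at j z u \<longleftrightarrow> z = w ! j" for z
      using insert_at_del[OF jw] nth_insert_at[OF j] True by metis
    then have "(\<Sum>z\<in>{1..n}. if w = insert_at j z u then f w else 0)
        = (\<Sum>z\<in>{1..n}. if z = w ! j then f w else 0)"
      by (intro sum.cong) auto
    ultimately show ?thesis
      using True by simp
  next
    case False
    then show ?thesis
      using del_insert_at[OF j] by (auto intro!: sum.neutral)
  qed
  have "(\<Sum>w\<in>words n (Suc (length u)). if del j w = u then f w else 0)
      = (\<Sum>w\<in>words n (Suc (length u)). \<Sum>z\<in>{1..n}. if w = insert_at j z u then f w else 0)"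
    by (rule sum.cong[OF refl pointwise])
  also have "\<dots> = (\<Sum>z\<in>{1..n}. \<Sum>w\<in>words n (Suc (length u)). if w = insert_at j z u then f w else 0)"
    by (rule sum.swap)
  also have "\<dots> = (\<Sum>z\<in>{1..n}. f (insert_at j z u))"
    using f by (intro sum.cong) (auto simp: chains_def)
  finally show ?thesis .
qed

lemma bd_eq_rel_bd:
  assumes f: "f \<in> chains n r"
  shows "bd n r f = rel_bd n {} f"
proof
  fix u
  have bd_swap: "bd n r f u = (\<Sum>j<r. (-1)^j * (\<Sum>w\<in>words n r. if del j w = u then f w else 0))"
    unfolding bd_def by (subst sum.swap) (auto simp: sum_distrib_left intro!: sum.cong)
  show "bd n r f u = rel_bd n {} f u"
  proof (cases "r = Suc (length u)")
    case True
    then have "{..<r} = {..length u}"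
      by auto
    then have "bd n r f u = (\<Sum>j\<le>length u. (-1)^j * (\<Sum>z\<in>{1..n}. f (insert_at j z u)))"
      unfolding bd_swap using f True by (auto intro!: sum.cong simp: sum_words_del_eq)
    then show ?thesis
      by (simp add: rel_bd_def sum_distrib_left)
  next
    case False
    have "del j w \<noteq> u" if "j < r" "w \<in> words n r" for j w
      using that False by (auto simp: del_def words_def)
    moreover have "f (insert_at j z u) = 0" for j z
      using f False by (auto simp: chains_def words_def)
    ultimately show ?thesis
      by (simp add: bd_swap rel_bd_def)
  qed
qed

lemma bd_exact:
  assumes "r < n" "f \<in> chains n r" "bd n r f = 0"
  shows "\<exists>g\<in>chains n (Suc r). bd n (Suc r) g = f"
  using rel_bd_exact[of r n f "{}"] assms bd_eq_rel_bd
  by (metis chains_eq_rel_chains)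

lemma bd_in_chains: "bd n (Suc r) f \<in> chains n r"
  unfolding chains_def
proof (intro CollectI allI impI)
  fix u
  assume "bd n (Suc r) f u \<noteq> 0"
  then obtain w where w: "w \<in> words n (Suc r)"
    and "(\<Sum>j<Suc r. if del j w = u then (-1)^j * f w else 0) \<noteq> 0"
    unfolding bd_def using sum.not_neutral_contains_not_neutral by blast
  then obtain j where "j < Suc r" "(if del j w = u then (-1)^j * f w else 0) \<noteq> 0"
    using sum.not_neutral_contains_not_neutral by blast
  then show "u \<in> words n r"
    using del_in_words[OF w] by (metis (full_types))
qed

section \<open>Adjointness and the Laplacian\<close>

lemma cobd_apply:
  "cobd n r g w = (if w \<in> words n (Suc r) then (\<Sum>j<Suc r. (-1)^j * g (del j w)) else 0)"
proof -
  have "(\<Sum>u\<in>words n r. \<Sum>j<Suc r. if del j w = u then (-1)^j * g u else 0)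
      = (\<Sum>j<Suc r. (-1)^j * g (del j w))" if w: "w \<in> words n (Suc r)"
  proof -
    have "(\<Sum>u\<in>words n r. \<Sum>j<Suc r. if del j w = u then (-1)^j * g u else 0)
        = (\<Sum>j<Suc r. \<Sum>u\<in>words n r. if del j w = u then (-1)^j * g u else 0)"
      by (rule sum.swap)
    also have "\<dots> = (\<Sum>j<Suc r. (-1)^j * g (del j w))"
      using del_in_words[OF w] by (intro sum.cong refl) (simp add: sum.delta')
    finally show ?thesis .
  qed
  then show ?thesis
    by (simp add: cobd_def)
qed

lemma cip_bd_cobd: "cip n r (bd n (Suc r) b) a = cip n (Suc r) b (cobd n r a)"
proof -
  have "cip n r (bd n (Suc r) b) a = (\<Sum>u\<in>words n r. \<Sum>w\<in>words n (Suc r). \<Sum>j<Suc r.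
      if del j w = u then (-1)^j * b w * cnj (a u) else 0)"
    unfolding cip_def bd_def sum_distrib_right by (intro sum.cong refl) simp
  also have "\<dots> = (\<Sum>w\<in>words n (Suc r). \<Sum>j<Suc r. \<Sum>u\<in>words n r.
      if del j w = u then (-1)^j * b w * cnj (a u) else 0)"
    by (subst sum.swap) (simp add: sum.swap[of _ "words n r"])
  also have "\<dots> = (\<Sum>w\<in>words n (Suc r). \<Sum>j<Suc r. (-1)^j * b w * cnj (a (del j w)))"
    by (intro sum.cong refl) (simp add: sum.delta' del_in_words)
  also have "\<dots> = cip n (Suc r) b (cobd n r a)"
    unfolding cip_def cobd_apply
    by (intro sum.cong refl) (simp del: sum.lessThan_Suc add: sum_distrib_left mult_ac)
  finally show ?thesis .
qed

definition sqnorm :: "nat \<Rightarrow> nat \<Rightarrow> (nat list \<Rightarrow> complex) \<Rightarrow> real" where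
  "sqnorm n r a = (\<Sum>w\<in>words n r. (cmod (a w))\<^sup>2)"

lemma sqnorm_nonneg: "0 \<le> sqnorm n r a"
  by (simp add: sqnorm_def sum_nonneg)

lemma sqnorm_eq_0_iff: "sqnorm n r a = 0 \<longleftrightarrow> (\<forall>w\<in>words n r. a w = 0)"
  by (simp add: sqnorm_def sum_nonneg_eq_0_iff)

lemma cip_self: "cip n r a a = of_real (sqnorm n r a)"
  unfolding cip_def sqnorm_def of_real_sum
  by (intro sum.cong refl) (rule complex_norm_square[symmetric])

lemma cip_cnj_commute: "cip n r a b = cnj (cip n r b a)"
  by (simp add: cip_def mult.commute)

text \<open>For \<open>r = 0\<close> the first summand is \<open>sqnorm n 0 0 = 0\<close> (truncated subtraction, and \<open>bd n 0 f = 0\<close>),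
  matching the absence of the term \<open>\<delta>\<partial>\<close> in \<open>\<Lambda>\<^sub>0\<close>.\<close>

lemma cip_lap_self:
  "cip n r (lap n r f) f = of_real (sqnorm n (r - 1) (bd n r f) + sqnorm n (Suc r) (cobd n r f))"
proof -
  have down: "cip n r (\<lambda>w. if r = 0 then 0 else cobd n (r - 1) (bd n r f) w) f
      = of_real (sqnorm n (r - 1) (bd n r f))"
  proof (cases r)
    case 0
    then have "bd n r f = 0"
      by (simp add: bd_def fun_eq_iff)
    with 0 show ?thesis
      by (simp add: cip_def sqnorm_def)
  next
    case (Suc r')
    have "cip n r (\<lambda>w. if r = 0 then 0 else cobd n (r - 1) (bd n r f) w) f
        = cnj (cip n (Suc r') f (cobd n r' (bd n r f)))"
      using Suc by (subst cip_cnj_commute) simp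
    also have "\<dots> = of_real (sqnorm n (r - 1) (bd n r f))"
      using Suc by (simp add: cip_bd_cobd[symmetric] cip_self)
    finally show ?thesis .
  qed
  have up: "cip n r (bd n (Suc r) (cobd n r f)) f = of_real (sqnorm n (Suc r) (cobd n r f))"
    by (simp add: cip_bd_cobd cip_self)
  show ?thesis
    using down up by (simp add: lap_def cip_def distrib_right sum.distrib)
qed

lemma bd_eq_0_iff_sqnorm: "bd n r f = 0 \<longleftrightarrow> sqnorm n (r - 1) (bd n r f) = 0"
proof (cases r)
  case 0
  then show ?thesis
    by (simp add: bd_def sqnorm_def fun_eq_iff)
next
  case (Suc r')
  then show ?thesis
    using bd_in_chains[of n r' f] by (auto simp: sqnorm_eq_0_iff chains_def fun_eq_iff)
qed

lemma harmonic_chain_eq_0: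
  assumes "r < n" and f: "f \<in> chains n r" and "bd n r f = 0" and "sqnorm n (Suc r) (cobd n r f) = 0"
  shows "f = 0"
proof -
  obtain g where "bd n (Suc r) g = f"
    using bd_exact assms(1-3) by blast
  then have "of_real (sqnorm n r f) = cip n (Suc r) g (cobd n r f)"
    by (metis cip_self cip_bd_cobd)
  also have "\<dots> = 0"
    using assms(4) by (simp add: cip_def sqnorm_eq_0_iff)
  finally have "\<forall>w\<in>words n r. f w = 0"
    by (simp add: sqnorm_eq_0_iff)
  with f show ?thesis
    by (auto simp: chains_def fun_eq_iff)
qed

theorem theorem3p3:
  fixes n r :: nat
  assumes "r < n"
  shows "(\<forall>f\<in>chains n r. f \<noteq> (\<lambda>_. 0) \<longrightarrow>
            cip n r (lap n r f) f \<in> \<real> \<and> 0 < Re (cip n r (lap n r f) f))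
         \<and> (\<forall>f\<in>chains n r. bd n r f = (\<lambda>_. 0) \<longrightarrow>
            (\<exists>g\<in>chains n (Suc r). bd n (Suc r) g = f))"
proof (rule conjI; intro ballI impI)
  fix f
  assume f: "f \<in> chains n r" and "f \<noteq> (\<lambda>_. 0)"
  let ?down = "sqnorm n (r - 1) (bd n r f)" and ?up = "sqnorm n (Suc r) (cobd n r f)"
  have nonneg: "0 \<le> ?down" "0 \<le> ?up"
    by (simp_all add: sqnorm_nonneg)
  have "0 < ?down + ?up"
  proof (rule ccontr)
    assume "\<not> 0 < ?down + ?up"
    then have "bd n r f = 0" "?up = 0"
      using nonneg bd_eq_0_iff_sqnorm by auto
    with \<open>f \<noteq> (\<lambda>_. 0)\<close> show False
      using harmonic_chain_eq_0[OF assms f] by (simp add: zero_fun_def)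
  qed
  then show "cip n r (lap n r f) f \<in> \<real> \<and> 0 < Re (cip n r (lap n r f) f)"
    by (simp add: cip_lap_self)
next
  fix f
  assume "f \<in> chains n r" "bd n r f = (\<lambda>_. 0)"
  then show "\<exists>g\<in>chains n (Suc r). bd n (Suc r) g = f"
    using bd_exact[OF assms] by (simp add: zero_fun_def)
qed

end
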